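(* Let $h>0$, $N\ge1$, $\delta_0\in(0,h/2)$, and let $\tilde A_1,\dots,\tilde A_N$ be nonzero constants. Define $\tilde\theta_i^{+}(x,y)=\tilde A_i\dfrac{\cosh(i(h-y))}{\sinh(ih)}\cos(ix)$ and $\tilde\theta_i^{-}(x,y)=\tilde A_i\dfrac{\cosh(i(h-y))}{\sinh(ih)}\sin(ix)$. Given vectors $f^+=(f_1^+,\dots,f_N^+)$ and $f^-=(f_1^-,\dots,f_N^-)$, there exists a smooth $2\pi$-periodic in $x$ function $\eta_1(x,y)$ with support in $\{(x,y):x\in\mathbb R,\ \delta_0<y<h\}$ such that $\langle\tilde\theta_i^{\pm},\eta_1\rangle=f_i^{\pm}$ for $i=1,\dots,N$.
   Context: $\langle u,v\rangle=\int_0^h\int_0^{2\pi}u(x,y)v(x,y)\,dx\,dy$. *)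

theory Defs
  imports "HOL-Analysis.Analysis"
begin

primrec Ck2 :: "nat \<Rightarrow> (real \<times> real \<Rightarrow> real) \<Rightarrow> bool" where
  "Ck2 0 f = continuous_on UNIV f"
| "Ck2 (Suc k) f = (\<exists>fx fy. (\<forall>p. (f has_derivative (\<lambda>(u, v). fx p * u + fy p * v)) (at p))
                         \<and> Ck2 k fx \<and> Ck2 k fy)"

definition smooth2 :: "(real \<times> real \<Rightarrow> real) \<Rightarrow> bool" where
  "smooth2 f \<longleftrightarrow> (\<forall>k. Ck2 k f)"

definition ip :: "real \<Rightarrow> (real \<times> real \<Rightarrow> real) \<Rightarrow> (real \<times> real \<Rightarrow> real) \<Rightarrow> real" where
  "ip h u v = integral {0..h} (\<lambda>y. integral {0..2*pi} (\<lambda>x. u (x, y) * v (x, y)))"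

definition theta_plus :: "(nat \<Rightarrow> real) \<Rightarrow> real \<Rightarrow> nat \<Rightarrow> real \<times> real \<Rightarrow> real" where
  "theta_plus A h i = (\<lambda>(x, y). A i * cosh (real i * (h - y)) / sinh (real i * h) * cos (real i * x))"

definition theta_minus :: "(nat \<Rightarrow> real) \<Rightarrow> real \<Rightarrow> nat \<Rightarrow> real \<times> real \<Rightarrow> real" where
  "theta_minus A h i = (\<lambda>(x, y). A i * cosh (real i * (h - y)) / sinh (real i * h) * sin (real i * x))"

end

theory Submission
  imports Defs "HOL-Computational_Algebra.Polynomial"
begin

(*
  Take eta(x, y) = g(x) * phi(y), where phi = bump (h/2) (3h/4) is a smooth nonnegative bump
  supported in [h/2, 3h/4], which lies in (delta0, h), and g is a trigonometric polynomial of
  degree N. The inner product of eta with theta_i^+ or theta_i^- then splits into a y-integral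
  times an x-integral. By orthogonality of cos (j x) and sin (j x) on [0, 2 pi] the x-integral is
  pi times the i-th cosine or sine coefficient of g, while the y-factor
  A_i / sinh (i h) * integral cosh (i (h - y)) phi(y) dy is nonzero since phi is not identically
  zero. Dividing f_i^+ and f_i^- by these factors gives the coefficients of g.
*)

definition smooth1 :: "(real \<Rightarrow> real) \<Rightarrow> bool" where
  "smooth1 u \<longleftrightarrow> (\<exists>D. D 0 = u \<and> (\<forall>n x. (D n has_real_derivative D (Suc n) x) (at x)))"

lemma smooth1_has_smooth_derivative:
  assumes "smooth1 u"
  obtains u' where "\<And>x. (u has_real_derivative u' x) (at x)" "smooth1 u'"
proof -
  obtain D where "D 0 = u" "\<And>n x. (D n has_real_derivative D (Suc n) x) (at x)"
    using assms unfolding smooth1_def by blast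
  then show ?thesis
    by (intro that[of "D 1"]) (auto simp: smooth1_def intro!: exI[of _ "\<lambda>n. D (Suc n)"])
qed

lemma smooth1_imp_isCont: "smooth1 u \<Longrightarrow> isCont u x"
  by (metis smooth1_has_smooth_derivative DERIV_isCont)

lemma smooth1_const: "smooth1 (\<lambda>x. c)"
  unfolding smooth1_def
  by (intro exI[of _ "\<lambda>n x. if n = 0 then c else 0"]) (auto intro!: derivative_eq_intros)

lemma smooth1_add:
  assumes "smooth1 u" "smooth1 v"
  shows "smooth1 (\<lambda>x. u x + v x)"
proof -
  obtain D E where "D 0 = u" "\<And>n x. (D n has_real_derivative D (Suc n) x) (at x)"
    and "E 0 = v" "\<And>n x. (E n has_real_derivative E (Suc n) x) (at x)"
    using assms unfolding smooth1_def by blast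
  then show ?thesis
    unfolding smooth1_def by (intro exI[of _ "\<lambda>n x. D n x + E n x"]) (auto intro!: derivative_eq_intros)
qed

lemma smooth1_cmult:
  assumes "smooth1 u"
  shows "smooth1 (\<lambda>x. c * u x)"
proof -
  obtain D where "D 0 = u" "\<And>n x. (D n has_real_derivative D (Suc n) x) (at x)"
    using assms unfolding smooth1_def by blast
  then show ?thesis
    unfolding smooth1_def by (intro exI[of _ "\<lambda>n x. c * D n x"]) (auto intro!: derivative_eq_intros)
qed

lemma smooth1_sum: "(\<And>j. j \<in> S \<Longrightarrow> smooth1 (f j)) \<Longrightarrow> smooth1 (\<lambda>x. \<Sum>j\<in>S. f j x)"
  by (induction S rule: infinite_finite_induct) (auto intro: smooth1_add smooth1_const)

lemma smooth1_cos: "smooth1 (\<lambda>x. cos (c * x + d))"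
  unfolding smooth1_def
proof (intro exI[of _ "\<lambda>n x. c ^ n * cos (c * x + d + real n * (pi/2))"] conjI allI)
  fix n x
  have "c * x + d + real (Suc n) * (pi/2) = (c * x + d + real n * (pi/2)) + pi/2"
    by (simp add: algebra_simps)
  then have "cos (c * x + d + real (Suc n) * (pi/2)) = - sin (c * x + d + real n * (pi/2))"
    by (simp only: cos_add) simp
  then show "((\<lambda>x. c ^ n * cos (c * x + d + real n * (pi / 2))) has_real_derivative
           c ^ Suc n * cos (c * x + d + real (Suc n) * (pi / 2))) (at x)"
    by (auto intro!: derivative_eq_intros)
qed auto

lemma smooth1_sin: "smooth1 (\<lambda>x. sin (c * x))"
  using smooth1_cos[of c "- (pi/2)"] by (simp add: cos_diff)

section \<open>The flat function exp (-1/t)\<close>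

lemma tendsto_poly_times_exp_neg: "((\<lambda>s. poly q s * exp (- s)) \<longlongrightarrow> (0::real)) at_top"
proof -
  have "((\<lambda>s. \<Sum>i\<le>degree q. coeff q i * (s ^ i / exp s)) \<longlongrightarrow> (0::real)) at_top"
    by (intro tendsto_null_sum tendsto_mult_right_zero tendsto_power_div_exp_0)
  moreover have "poly q s * exp (- s) = (\<Sum>i\<le>degree q. coeff q i * (s ^ i / exp s))" for s
    by (simp add: poly_altdef exp_minus divide_inverse sum_distrib_right mult.assoc)
  ultimately show ?thesis by simp
qed

definition exp_step :: "real \<Rightarrow> real" where
  "exp_step t = (if t \<le> 0 then 0 else exp (- 1 / t))"

text \<open>On \<open>t > 0\<close> the \<open>n\<close>-th derivative of \<open>exp_step\<close> is \<open>poly (exp_step_poly n) (1/t) * exp (-1/t)\<close>.\<close>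

fun exp_step_poly :: "nat \<Rightarrow> real poly" where
  "exp_step_poly 0 = 1"
| "exp_step_poly (Suc n) = [:0, 0, 1:] * (exp_step_poly n - pderiv (exp_step_poly n))"

definition exp_step_deriv :: "nat \<Rightarrow> real \<Rightarrow> real" where
  "exp_step_deriv n t = (if t \<le> 0 then 0 else poly (exp_step_poly n) (1 / t) * exp (- 1 / t))"

lemma has_real_derivative_poly_inverse_exp:
  assumes "t > 0"
  shows "((\<lambda>t. poly p (1 / t) * exp (- 1 / t)) has_real_derivative
          poly ([:0, 0, 1:] * (p - pderiv p)) (1 / t) * exp (- 1 / t)) (at t)"
proof -
  have "((\<lambda>t. poly p (1 / t) * exp (- 1 / t)) has_real_derivative
          poly (pderiv p) (1 / t) * (- 1 / t^2) * exp (- 1 / t) + poly p (1/t) * (exp (- 1 / t) * (1 / t^2))) (at t)"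
    using assms
    by (auto intro!: derivative_eq_intros DERIV_chain2[where f="poly p"] simp: power2_eq_square field_simps)
  then show ?thesis
    using assms by (simp add: field_simps power2_eq_square poly_pCons)
qed

lemma exp_step_deriv_div_tendsto_0: "((\<lambda>t. exp_step_deriv n t / t) \<longlongrightarrow> 0) (at 0)"
proof (rule filterlim_split_at)
  show "((\<lambda>t. exp_step_deriv n t / t) \<longlongrightarrow> 0) (at_left 0)"
    by (rule Lim_transform_eventually[OF tendsto_const])
       (auto simp: eventually_at_left_field exp_step_deriv_def intro: exI[of _ "-1"])
  have "((\<lambda>s. poly (pCons 0 (exp_step_poly n)) s * exp (- s)) \<longlongrightarrow> (0::real)) at_top"
    by (rule tendsto_poly_times_exp_neg)
  then have "((\<lambda>s. exp_step_deriv n (inverse s) / inverse s) \<longlongrightarrow> 0) at_top"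
    by (rule Lim_transform_eventually)
       (use eventually_gt_at_top[of 0] in \<open>eventually_elim, auto simp: exp_step_deriv_def field_simps\<close>)
  then show "((\<lambda>t. exp_step_deriv n t / t) \<longlongrightarrow> 0) (at_right 0)"
    by (simp add: filterlim_at_right_to_top)
qed

lemma has_real_derivative_exp_step_deriv:
  "(exp_step_deriv n has_real_derivative exp_step_deriv (Suc n) t) (at t)"
proof (cases t "0 :: real" rule: linorder_cases)
  case less
  show ?thesis
    by (rule has_field_derivative_transform_within_open[of "\<lambda>t. 0" _ _ "{..<0}"])
       (use less in \<open>auto simp: exp_step_deriv_def\<close>)
next
  case equal
  then show ?thesis
    using exp_step_deriv_div_tendsto_0 unfolding DERIV_def by (simp add: exp_step_deriv_def)
next
  case greater
  show ?thesis
  proof (rule has_field_derivative_transform_within_open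
      [of "\<lambda>t. poly (exp_step_poly n) (1 / t) * exp (- 1 / t)" _ _ "{0<..}"])
    show "((\<lambda>t. poly (exp_step_poly n) (1 / t) * exp (- 1 / t)) has_real_derivative
        exp_step_deriv (Suc n) t) (at t)"
      using has_real_derivative_poly_inverse_exp[OF greater] greater by (simp add: exp_step_deriv_def)
  qed (use greater in \<open>auto simp: exp_step_deriv_def\<close>)
qed

lemma smooth1_exp_step: "smooth1 exp_step"
  unfolding smooth1_def
  by (intro exI[of _ exp_step_deriv] conjI allI has_real_derivative_exp_step_deriv)
     (auto simp: exp_step_deriv_def exp_step_def fun_eq_iff)

lemma Ck2_SucD: "Ck2 (Suc k) f \<Longrightarrow> Ck2 k f"
proof (induction k arbitrary: f)
  case 0
  then obtain fx fy where "\<And>p. (f has_derivative (\<lambda>(u, v). fx p * u + fy p * v)) (at p)"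
    by auto
  then show ?case
    unfolding Ck2.simps by (intro continuous_at_imp_continuous_on ballI has_derivative_continuous)
next
  case (Suc k)
  then show ?case by (metis Ck2.simps(2))
qed

lemma Ck2_add: "Ck2 k f \<Longrightarrow> Ck2 k g \<Longrightarrow> Ck2 k (\<lambda>p. f p + g p)"
proof (induction k arbitrary: f g)
  case 0
  then show ?case by (auto intro: continuous_on_add)
next
  case (Suc k)
  from Suc.prems obtain fx fy gx gy where
    f: "\<And>p. (f has_derivative (\<lambda>(u, v). fx p * u + fy p * v)) (at p)" "Ck2 k fx" "Ck2 k fy" and
    g: "\<And>p. (g has_derivative (\<lambda>(u, v). gx p * u + gy p * v)) (at p)" "Ck2 k gx" "Ck2 k gy"
    by auto
  have "((\<lambda>p. f p + g p) has_derivative (\<lambda>(u, v). (fx p + gx p) * u + (fy p + gy p) * v)) (at p)" for p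
    by (rule has_derivative_eq_rhs[OF has_derivative_add[OF f(1) g(1)]]) (auto simp: fun_eq_iff algebra_simps)
  then show ?case
    unfolding Ck2.simps
    by (intro exI[of _ "\<lambda>p. fx p + gx p"] exI[of _ "\<lambda>p. fy p + gy p"] conjI allI Suc.IH f g)
qed

lemma Ck2_mult: "Ck2 k f \<Longrightarrow> Ck2 k g \<Longrightarrow> Ck2 k (\<lambda>p. f p * g p)"
proof (induction k arbitrary: f g)
  case 0
  then show ?case by (auto intro: continuous_on_mult)
next
  case (Suc k)
  from Suc.prems obtain fx fy gx gy where
    f: "\<And>p. (f has_derivative (\<lambda>(u, v). fx p * u + fy p * v)) (at p)" "Ck2 k fx" "Ck2 k fy" and
    g: "\<And>p. (g has_derivative (\<lambda>(u, v). gx p * u + gy p * v)) (at p)" "Ck2 k gx" "Ck2 k gy"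
    by auto
  have "((\<lambda>p. f p * g p) has_derivative
      (\<lambda>(u, v). (fx p * g p + f p * gx p) * u + (fy p * g p + f p * gy p) * v)) (at p)" for p
    by (rule has_derivative_eq_rhs[OF has_derivative_mult[OF f(1) g(1)]]) (auto simp: fun_eq_iff algebra_simps)
  moreover have "Ck2 k f" "Ck2 k g"
    using Suc.prems by (simp_all only: Ck2_SucD)
  ultimately show ?case
    unfolding Ck2.simps
    by (intro exI[of _ "\<lambda>p. fx p * g p + f p * gx p"] exI[of _ "\<lambda>p. fy p * g p + f p * gy p"]
        conjI allI Ck2_add Suc.IH f g)
qed

lemma Ck2_smooth1_comp_affine:
  "smooth1 u \<Longrightarrow> Ck2 k (\<lambda>p. u (\<alpha> * fst p + \<beta> * snd p + \<gamma>))"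
proof (induction k arbitrary: u)
  case 0
  have "isCont (\<lambda>p. u (\<alpha> * fst p + \<beta> * snd p + \<gamma>)) p" for p
    by (rule isCont_o2[OF _ smooth1_imp_isCont[OF "0.prems"]]) (intro continuous_intros)
  then show ?case
    by (simp add: continuous_at_imp_continuous_on)
next
  case (Suc k)
  obtain u' where u': "\<And>x. (u has_real_derivative u' x) (at x)" "smooth1 u'"
    using smooth1_has_smooth_derivative[OF Suc.prems] by blast
  have "((\<lambda>p. u (\<alpha> * fst p + \<beta> * snd p + \<gamma>)) has_derivative
      (\<lambda>(s, t). \<alpha> * u' (\<alpha> * fst p + \<beta> * snd p + \<gamma>) * s + \<beta> * u' (\<alpha> * fst p + \<beta> * snd p + \<gamma>) * t)) (at p)"
    for p :: "real \<times> real"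
    by (rule has_derivative_eq_rhs[OF has_derivative_compose[OF _ u'(1)[unfolded has_field_derivative_def]]])
       (auto intro!: derivative_eq_intros simp: fun_eq_iff algebra_simps)
  then show ?case
    unfolding Ck2.simps
    by (intro exI[of _ "\<lambda>p. \<alpha> * u' (\<alpha> * fst p + \<beta> * snd p + \<gamma>)"]
        exI[of _ "\<lambda>p. \<beta> * u' (\<alpha> * fst p + \<beta> * snd p + \<gamma>)"]
        conjI allI Suc.IH[OF smooth1_cmult[OF u'(2)]])
qed

section \<open>Bump functions\<close>

definition bump :: "real \<Rightarrow> real \<Rightarrow> real \<Rightarrow> real" where
  "bump a b y = exp_step (y - a) * exp_step (b - y)"

lemma bump_nonneg: "bump a b y \<ge> 0"
  by (simp add: bump_def exp_step_def)

lemma bump_pos: "a < y \<Longrightarrow> y < b \<Longrightarrow> bump a b y > 0"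
  by (simp add: bump_def exp_step_def)

lemma bump_eq_0: "y \<le> a \<or> b \<le> y \<Longrightarrow> bump a b y = 0"
  by (auto simp: bump_def exp_step_def)

lemma continuous_on_bump: "continuous_on S (bump a b)"
proof -
  have "isCont exp_step t" for t
    by (rule smooth1_imp_isCont[OF smooth1_exp_step])
  then have "isCont (\<lambda>y. exp_step (y - a)) y" "isCont (\<lambda>y. exp_step (b - y)) y" for y
    by (auto intro: isCont_o2[where g = exp_step])
  then have "isCont (bump a b) y" for y
    unfolding bump_def by (intro continuous_mult)
  then show ?thesis
    by (simp add: continuous_at_imp_continuous_on)
qed

lemma Ck2_bump_snd: "Ck2 k (\<lambda>p. bump a b (snd p))"
proof -
  have "Ck2 k (\<lambda>p. exp_step (snd p - a))"
    using Ck2_smooth1_comp_affine[OF smooth1_exp_step, of k 0 1 "- a"] by simp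
  moreover have "Ck2 k (\<lambda>p. exp_step (b - snd p))"
    using Ck2_smooth1_comp_affine[OF smooth1_exp_step, of k 0 "- 1" b] by simp
  ultimately show ?thesis
    unfolding bump_def by (rule Ck2_mult)
qed

lemma closure_support_bump_snd:
  "closure {p. f p * bump a b (snd p) \<noteq> 0} \<subseteq> {p. a \<le> snd p \<and> snd p \<le> b}"
proof (rule closure_minimal)
  show "{p. f p * bump a b (snd p) \<noteq> 0} \<subseteq> {p. a \<le> snd p \<and> snd p \<le> b}"
  proof safe
    fix p assume "f p * bump a b (snd p) \<noteq> 0"
    then have "\<not> (snd p \<le> a \<or> b \<le> snd p)"
      using bump_eq_0 by (metis mult_zero_right)
    then show "a \<le> snd p" "snd p \<le> b"
      by auto
  qed
  show "closed {p :: 'a \<times> real. a \<le> snd p \<and> snd p \<le> b}"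
    by (intro closed_Collect_conj closed_Collect_le continuous_on_const continuous_on_snd continuous_on_id)
qed

lemma integral_pos_if_pos_at:
  fixes f :: "real \<Rightarrow> real"
  assumes "continuous_on {a..b} f" "a < b" "\<And>x. x \<in> {a..b} \<Longrightarrow> f x \<ge> 0"
    and "x \<in> {a..b}" "f x > 0"
  shows "integral {a..b} f > 0"
proof -
  have "integral {a..b} f \<ge> 0"
    using assms(1,3) by (intro integral_nonneg integrable_continuous_interval) auto
  moreover have "integral {a..b} f \<noteq> 0"
    using integral_eq_0_iff[OF assms(1-3)] assms(4,5) by auto
  ultimately show ?thesis by simp
qed

lemma has_integral_cos_multiple:
  assumes "m \<in> \<int>"
  shows "((\<lambda>x. cos (m * x)) has_integral (if m = 0 then 2 * pi else 0)) {0..2*pi}"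
proof (cases "m = 0")
  case True
  then show ?thesis
    using has_integral_const_real[of "1 :: real" 0 "2 * pi"] by simp
next
  case False
  have "((\<lambda>x. cos (m * x)) has_integral sin (m * (2 * pi)) / m - sin (m * 0) / m) {0..2*pi}"
    using False
    by (intro fundamental_theorem_of_calculus)
       (auto intro!: derivative_eq_intros simp: has_real_derivative_iff_has_vector_derivative[symmetric])
  with False sin_integer_2pi[OF assms] show ?thesis
    by (simp add: mult.commute)
qed

lemma has_integral_sin_multiple:
  assumes "m \<in> \<int>"
  shows "((\<lambda>x. sin (m * x)) has_integral 0) {0..2*pi}"
proof (cases "m = 0")
  case False
  have "((\<lambda>x. sin (m * x)) has_integral (- cos (m * (2 * pi)) / m) - (- cos (m * 0) / m)) {0..2*pi}"
    using False
    by (intro fundamental_theorem_of_calculus)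
       (auto intro!: derivative_eq_intros simp: has_real_derivative_iff_has_vector_derivative[symmetric])
  with False cos_integer_2pi[OF assms] show ?thesis
    by (simp add: mult.commute)
qed simp

lemma has_integral_cos_times_cos:
  assumes "i > 0"
  shows "((\<lambda>x. cos (real i * x) * cos (real j * x)) has_integral (if i = j then pi else 0)) {0..2*pi}"
proof -
  have I: "((\<lambda>x. (cos ((real i - real j) * x) + cos ((real i + real j) * x)) / 2) has_integral
      ((if real i - real j = 0 then 2 * pi else 0) + (if real i + real j = 0 then 2 * pi else 0)) / 2)
      {0..2*pi}"
    by (intro has_integral_divide has_integral_add has_integral_cos_multiple) auto
  have eq: "(\<lambda>x. (cos ((real i - real j) * x) + cos ((real i + real j) * x)) / 2) =
      (\<lambda>x. cos (real i * x) * cos (real j * x))"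
    by (simp add: fun_eq_iff cos_times_cos algebra_simps)
  show ?thesis
    by (rule has_integral_eq_rhs[OF I[unfolded eq]]) (use assms in auto)
qed

lemma has_integral_sin_times_sin:
  assumes "i > 0"
  shows "((\<lambda>x. sin (real i * x) * sin (real j * x)) has_integral (if i = j then pi else 0)) {0..2*pi}"
proof -
  have I: "((\<lambda>x. (cos ((real i - real j) * x) - cos ((real i + real j) * x)) / 2) has_integral
      ((if real i - real j = 0 then 2 * pi else 0) - (if real i + real j = 0 then 2 * pi else 0)) / 2)
      {0..2*pi}"
    by (intro has_integral_divide has_integral_diff has_integral_cos_multiple) auto
  have eq: "(\<lambda>x. (cos ((real i - real j) * x) - cos ((real i + real j) * x)) / 2) =
      (\<lambda>x. sin (real i * x) * sin (real j * x))"
    by (simp add: fun_eq_iff sin_times_sin algebra_simps)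
  show ?thesis
    by (rule has_integral_eq_rhs[OF I[unfolded eq]]) (use assms in auto)
qed

lemma has_integral_cos_times_sin:
  "((\<lambda>x. cos (real i * x) * sin (real j * x)) has_integral 0) {0..2*pi}"
proof -
  have I: "((\<lambda>x. (sin ((real i + real j) * x) - sin ((real i - real j) * x)) / 2) has_integral
      (0 - 0) / 2) {0..2*pi}"
    by (intro has_integral_divide has_integral_diff has_integral_sin_multiple) auto
  have eq: "(\<lambda>x. (sin ((real i + real j) * x) - sin ((real i - real j) * x)) / 2) =
      (\<lambda>x. cos (real i * x) * sin (real j * x))"
    by (simp add: fun_eq_iff cos_times_sin algebra_simps)
  show ?thesis
    using I unfolding eq by simp
qed

section \<open>Trigonometric polynomials\<close>

definition trig_poly :: "(nat \<Rightarrow> real) \<Rightarrow> (nat \<Rightarrow> real) \<Rightarrow> nat set \<Rightarrow> real \<Rightarrow> real" where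
  "trig_poly a b S x = (\<Sum>j\<in>S. a j * cos (real j * x) + b j * sin (real j * x))"

lemma smooth1_trig_poly: "smooth1 (trig_poly a b S)"
proof -
  have "smooth1 (\<lambda>x. cos (real j * x))" for j
    using smooth1_cos[of "real j" 0] by simp
  then show ?thesis
    unfolding trig_poly_def by (intro smooth1_sum smooth1_add smooth1_cmult smooth1_sin)
qed

lemma trig_poly_periodic: "trig_poly a b S (x + 2 * pi) = trig_poly a b S x"
proof -
  have "cos (real j * (2 * pi)) = 1" "sin (real j * (2 * pi)) = 0" for j
    using cos_integer_2pi[of "real j"] sin_integer_2pi[of "real j"] by (simp_all add: mult.commute)
  then show ?thesis
    unfolding trig_poly_def by (simp add: distrib_left cos_add sin_add)
qed

lemma has_integral_cos_times_trig_poly: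
  assumes "finite S" "i \<in> S" "i > 0"
  shows "((\<lambda>x. cos (real i * x) * trig_poly a b S x) has_integral a i * pi) {0..2*pi}"
proof -
  have I: "((\<lambda>x. \<Sum>j\<in>S. a j * (cos (real i * x) * cos (real j * x)) + b j * (cos (real i * x) * sin (real j * x)))
      has_integral (\<Sum>j\<in>S. a j * (if i = j then pi else 0) + b j * 0)) {0..2*pi}"
    by (intro has_integral_sum has_integral_add has_integral_mult_right
        has_integral_cos_times_cos has_integral_cos_times_sin assms(1,3))
  have eq: "(\<lambda>x. \<Sum>j\<in>S. a j * (cos (real i * x) * cos (real j * x)) + b j * (cos (real i * x) * sin (real j * x)))
      = (\<lambda>x. cos (real i * x) * trig_poly a b S x)"
    by (simp add: fun_eq_iff trig_poly_def sum_distrib_left algebra_simps)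
  have "(\<Sum>j\<in>S. a j * (if i = j then pi else 0) + b j * 0) = (\<Sum>j\<in>S. if i = j then a j * pi else 0)"
    by (intro sum.cong) auto
  also have "\<dots> = a i * pi"
    using assms by (simp add: sum.delta)
  finally show ?thesis
    using I unfolding eq by simp
qed

lemma has_integral_sin_times_trig_poly:
  assumes "finite S" "i \<in> S" "i > 0"
  shows "((\<lambda>x. sin (real i * x) * trig_poly a b S x) has_integral b i * pi) {0..2*pi}"
proof -
  have I: "((\<lambda>x. \<Sum>j\<in>S. a j * (cos (real j * x) * sin (real i * x)) + b j * (sin (real i * x) * sin (real j * x)))
      has_integral (\<Sum>j\<in>S. a j * 0 + b j * (if i = j then pi else 0))) {0..2*pi}"
    by (intro has_integral_sum has_integral_add has_integral_mult_right
        has_integral_sin_times_sin has_integral_cos_times_sin assms(1,3))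
  have eq: "(\<lambda>x. \<Sum>j\<in>S. a j * (cos (real j * x) * sin (real i * x)) + b j * (sin (real i * x) * sin (real j * x)))
      = (\<lambda>x. sin (real i * x) * trig_poly a b S x)"
    by (simp add: fun_eq_iff trig_poly_def sum_distrib_left algebra_simps)
  have "(\<Sum>j\<in>S. a j * 0 + b j * (if i = j then pi else 0)) = (\<Sum>j\<in>S. if i = j then b j * pi else 0)"
    by (intro sum.cong) auto
  also have "\<dots> = b i * pi"
    using assms by (simp add: sum.delta)
  finally show ?thesis
    using I unfolding eq by simp
qed

lemma ip_product:
  "ip h (\<lambda>(x, y). p y * u x) (\<lambda>z. v (fst z) * q (snd z)) =
    integral {0..h} (\<lambda>y. p y * q y) * integral {0..2*pi} (\<lambda>x. u x * v x)"
proof -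
  have "(\<lambda>x. p y * u x * (v x * q y)) = (\<lambda>x. p y * q y * (u x * v x))" for y
    by (simp add: fun_eq_iff mult_ac)
  then show ?thesis
    by (simp add: ip_def)
qed

lemma integral_cosh_times_bump_pos:
  assumes "0 \<le> a" "a < b" "b \<le> h"
  shows "integral {0..h} (\<lambda>y. cosh (k * (h - y)) * bump a b y) > 0"
  using assms
  by (intro integral_pos_if_pos_at[where x = "(a + b) / 2"] continuous_on_mult continuous_on_bump
      continuous_intros mult_nonneg_nonneg mult_pos_pos bump_nonneg bump_pos) auto

lemma smooth2_trig_poly_times_bump:
  "smooth2 (\<lambda>z. trig_poly a b S (fst z) * bump c d (snd z))"
  unfolding smooth2_def
  using Ck2_mult[OF Ck2_smooth1_comp_affine[OF smooth1_trig_poly, where \<alpha> = 1 and \<beta> = 0 and \<gamma> = 0]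
      Ck2_bump_snd]
  by simp

lemma integral_theta_profile:
  "integral {0..h} (\<lambda>y. A i * cosh (real i * (h - y)) / sinh (real i * h) * \<phi> y) =
    A i / sinh (real i * h) * integral {0..h} (\<lambda>y. cosh (real i * (h - y)) * \<phi> y)"
proof -
  have "(\<lambda>y. A i * cosh (real i * (h - y)) / sinh (real i * h) * \<phi> y) =
      (\<lambda>y. A i / sinh (real i * h) * (cosh (real i * (h - y)) * \<phi> y))"
    by (simp add: fun_eq_iff)
  then show ?thesis
    by (simp only: integral_mult_right)
qed

lemma ip_theta_plus_trig_poly:
  assumes "finite S" "i \<in> S" "i > 0"
  shows "ip h (theta_plus A h i) (\<lambda>z. trig_poly a b S (fst z) * \<phi> (snd z)) =
    A i / sinh (real i * h) * integral {0..h} (\<lambda>y. cosh (real i * (h - y)) * \<phi> y) * (a i * pi)"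
  unfolding theta_plus_def
    ip_product[of h "\<lambda>y. A i * cosh (real i * (h - y)) / sinh (real i * h)" "\<lambda>x. cos (real i * x)"]
    integral_unique[OF has_integral_cos_times_trig_poly[OF assms]] integral_theta_profile ..

lemma ip_theta_minus_trig_poly:
  assumes "finite S" "i \<in> S" "i > 0"
  shows "ip h (theta_minus A h i) (\<lambda>z. trig_poly a b S (fst z) * \<phi> (snd z)) =
    A i / sinh (real i * h) * integral {0..h} (\<lambda>y. cosh (real i * (h - y)) * \<phi> y) * (b i * pi)"
  unfolding theta_minus_def
    ip_product[of h "\<lambda>y. A i * cosh (real i * (h - y)) / sinh (real i * h)" "\<lambda>x. sin (real i * x)"]
    integral_unique[OF has_integral_sin_times_trig_poly[OF assms]] integral_theta_profile ..

theorem lemma9p2: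
  fixes h \<delta>0 :: real and N :: nat and A fp fm :: "nat \<Rightarrow> real"
  assumes "h > 0" and "N \<ge> 1" and "0 < \<delta>0" and "\<delta>0 < h / 2"
    and "\<And>i. i \<in> {1..N} \<Longrightarrow> A i \<noteq> 0"
  shows "\<exists>\<eta> :: real \<times> real \<Rightarrow> real.
           smooth2 \<eta>
         \<and> (\<forall>x y. \<eta> (x + 2 * pi, y) = \<eta> (x, y))
         \<and> closure {p. \<eta> p \<noteq> 0} \<subseteq> {p. \<delta>0 < snd p \<and> snd p < h}
         \<and> (\<forall>i\<in>{1..N}. ip h (theta_plus A h i) \<eta> = fp i
                       \<and> ip h (theta_minus A h i) \<eta> = fm i)"
proof -
  define \<phi> where "\<phi> = bump (h/2) (3*h/4)"
  define c where "c i = A i / sinh (real i * h) * integral {0..h} (\<lambda>y. cosh (real i * (h - y)) * \<phi> y) * pi"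
    for i
  define \<eta> where "\<eta> = (\<lambda>z. trig_poly (\<lambda>i. fp i / c i) (\<lambda>i. fm i / c i) {1..N} (fst z) * \<phi> (snd z))"
  have "ip h (theta_plus A h i) \<eta> = fp i \<and> ip h (theta_minus A h i) \<eta> = fm i" if i: "i \<in> {1..N}" for i
  proof -
    have pos: "i > 0"
      using i by simp
    have "c i \<noteq> 0"
      using integral_cosh_times_bump_pos[of "h/2" "3*h/4" h "real i"] assms(1,5) i pos
      by (simp add: c_def \<phi>_def)
    moreover have "ip h (theta_plus A h i) \<eta> = c i * (fp i / c i)"
      "ip h (theta_minus A h i) \<eta> = c i * (fm i / c i)"
      unfolding \<eta>_def ip_theta_plus_trig_poly[OF finite_atLeastAtMost i pos]
        ip_theta_minus_trig_poly[OF finite_atLeastAtMost i pos]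
      by (simp_all only: c_def mult_ac)
    ultimately show ?thesis
      by simp
  qed
  moreover have "closure {p. \<eta> p \<noteq> 0} \<subseteq> {p. \<delta>0 < snd p \<and> snd p < h}"
    using closure_support_bump_snd[of _ "h/2" "3*h/4"] assms(1,4) unfolding \<eta>_def \<phi>_def by fastforce
  ultimately show ?thesis
    using smooth2_trig_poly_times_bump
    by (intro exI[of _ \<eta>]) (auto simp: \<eta>_def \<phi>_def trig_poly_periodic)
qed

end
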